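(* The Hilbert calculus ${\bf Tm4d}$ is sound and complete with respect to the Nmatrix $\mathcal M_{\bf Tm4d}$: for every $\Gamma\cup\{\alpha\}\subseteq For$, $\Gamma\vdash_{\bf Tm4d}\alpha$ iff $\Gamma\vDash_{\mathcal M_{\bf Tm4d}}\alpha$.
   Context: Formulas are built from a denumerable set of propositional variables by the unary connectives $\neg$, $\Box$ and the binary connective $\to$; $For$ is the set of all formulas. Abbreviations: $\Diamond\alpha:=\neg\Box\neg\alpha$, $\alpha\vee\beta:=\neg\alpha\to\beta$. ${\bf Tm4d}$ is the Hilbert calculus whose axioms are all instances (over $For$) of the axiom schemas of a standard Hilbert calculus for classical propositional logic in the signature $\{\neg,\to\}$, plus all instances of: (K) $\Box(\alpha\to\beta)\to(\Box\alpha\to\Box\beta)$; (Kdet) $\Box(\alpha\to\beta)\to(\Diamond\alpha\to\Box\beta)$; (K2) $\Diamond(\alpha\to\beta)\to(\Box\alpha\to\Diamond\beta)$; (M1) $\neg\Diamond\alpha\to\Box(\alpha\to\beta)$; (M2) $\Box\beta\to\Box(\alpha\to\beta)$; (M3) $\Diamond\beta\to\Diamond(\alpha\to\beta)$; (M4) $\Diamond\neg\alpha\to\Diamond(\alpha\to\beta)$; (T) $\Box\alpha\to\alpha$; (DN1) $\Box\alpha\to\Box\neg\neg\alpha$; (DN2) $\Box\neg\neg\alpha\to\Box\alpha$; (4) $\Box\alpha\to\Box\Box\alpha$; modus ponens is the only rule. Nmatrix semantics: an Nmatrix has a domain $A$, designated values $D\subseteq A$ and, for each connective, a multioperation giving nonempty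 subsets of $A$; a valuation is $v:For\to A$ with $v(\neg\alpha)\in\tilde\neg(v(\alpha))$, $v(\Box\alpha)\in\tilde\Box(v(\alpha))$, $v(\alpha\to\beta)\in v(\alpha)\tilde\to v(\beta)$; $\Gamma\vDash\alpha$ iff every valuation designating all of $\Gamma$ designates $\alpha$. $\mathcal M_{\bf Tm4d}$: domain $\{T^+,C^+,C^-,F^-\}$, designated $\{T^+,C^+\}$; $\tilde\neg T^+=\{F^-\}$, $\tilde\neg C^+=\{C^-\}$, $\tilde\neg C^-=\{C^+\}$, $\tilde\neg F^-=\{T^+\}$; $\tilde\Box T^+=\{T^+\}$ and $\tilde\Box x=\{C^-,F^-\}$ for $x\neq T^+$; implication is deterministic: $x\tilde\to y=\{\max(n(x),y)\}$, where $n(T^+)=F^-$, $n(C^+)=C^-$, $n(C^-)=C^+$, $n(F^-)=T^+$ and the maximum is taken in the chain $F^-<C^-<C^+<T^+$. *)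

theory Defs
  imports Main
begin

datatype fm = Var nat | Neg fm | Box fm | Imp fm fm

definition Dia :: "fm \<Rightarrow> fm" where "Dia a = Neg (Box (Neg a))"

inductive axiom :: "fm \<Rightarrow> bool" where
  A1: "axiom (Imp a (Imp b a))"
| A2: "axiom (Imp (Imp a (Imp b c)) (Imp (Imp a b) (Imp a c)))"
| A3: "axiom (Imp (Imp (Neg b) (Neg a)) (Imp (Imp (Neg b) a) b))"
| K: "axiom (Imp (Box (Imp a b)) (Imp (Box a) (Box b)))"
| Kdet: "axiom (Imp (Box (Imp a b)) (Imp (Dia a) (Box b)))"
| K2: "axiom (Imp (Dia (Imp a b)) (Imp (Box a) (Dia b)))"
| M1: "axiom (Imp (Neg (Dia a)) (Box (Imp a b)))"
| M2: "axiom (Imp (Box b) (Box (Imp a b)))"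
| M3: "axiom (Imp (Dia b) (Dia (Imp a b)))"
| M4: "axiom (Imp (Dia (Neg a)) (Dia (Imp a b)))"
| T: "axiom (Imp (Box a) a)"
| DN1: "axiom (Imp (Box a) (Box (Neg (Neg a))))"
| DN2: "axiom (Imp (Box (Neg (Neg a))) (Box a))"
| Four: "axiom (Imp (Box a) (Box (Box a)))"

inductive derivable :: "fm set \<Rightarrow> fm \<Rightarrow> bool" where
  Prem: "a \<in> \<Gamma> \<Longrightarrow> derivable \<Gamma> a"
| Ax: "axiom a \<Longrightarrow> derivable \<Gamma> a"
| MP: "derivable \<Gamma> a \<Longrightarrow> derivable \<Gamma> (Imp a b) \<Longrightarrow> derivable \<Gamma> b"

datatype tv = Tp | Cp | Cm | Fm

definition designated :: "tv set" where "designated = {Tp, Cp}"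

fun negM :: "tv \<Rightarrow> tv set" where
  "negM Tp = {Fm}" | "negM Cp = {Cm}" | "negM Cm = {Cp}" | "negM Fm = {Tp}"

fun boxM :: "tv \<Rightarrow> tv set" where
  "boxM Tp = {Tp}" | "boxM x = {Cm, Fm}"

fun rank :: "tv \<Rightarrow> nat" where
  "rank Fm = 0" | "rank Cm = 1" | "rank Cp = 2" | "rank Tp = 3"

fun nfun :: "tv \<Rightarrow> tv" where
  "nfun Tp = Fm" | "nfun Cp = Cm" | "nfun Cm = Cp" | "nfun Fm = Tp"

definition tmax :: "tv \<Rightarrow> tv \<Rightarrow> tv" where
  "tmax x y = (if rank x \<le> rank y then y else x)"

definition impM :: "tv \<Rightarrow> tv \<Rightarrow> tv set" where
  "impM x y = {tmax (nfun x) y}"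

definition valuation :: "(fm \<Rightarrow> tv) \<Rightarrow> bool" where
  "valuation v \<longleftrightarrow> (\<forall>a. v (Neg a) \<in> negM (v a)) \<and> (\<forall>a. v (Box a) \<in> boxM (v a))
     \<and> (\<forall>a b. v (Imp a b) \<in> impM (v a) (v b))"

definition entails :: "fm set \<Rightarrow> fm \<Rightarrow> bool" where
  "entails \<Gamma> a \<longleftrightarrow> (\<forall>v. valuation v \<longrightarrow> (\<forall>g\<in>\<Gamma>. v g \<in> designated) \<longrightarrow> v a \<in> designated)"

end

theory Submission
  imports Defs
begin

(* A truth value is determined by whether it is designated and whether it is one of the
   extreme values T+, F-.  Designation behaves classically under negation and implication,
   T+ and F- propagate through them like truth and falsity, and v(Box a) is designated iff it
   is T+ iff v(a) = T+; soundness is then a finite check of each axiom.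
   For completeness, Zorn's lemma extends Gamma to a set D maximal among those not deriving
   alpha.  The canonical valuation reads both properties of p off D: p is designated iff
   p \<in> D, it is T+ iff Box p \<in> D, and it is F- iff Box (Neg p) \<in> D.  The axioms T, 4, DN1,
   DN2, M1, M2, Kdet, K2, M3 and M4 are precisely the closure properties of D that make this
   a valuation of the Nmatrix. *)

lemma designated_simps [simp]:
  "Tp \<in> designated" "Cp \<in> designated" "Cm \<notin> designated" "Fm \<notin> designated"
  by (simp_all add: designated_def)

lemma tv_eq_iff:
  "x = y \<longleftrightarrow> (x \<in> designated \<longleftrightarrow> y \<in> designated) \<and> (x = Tp \<longleftrightarrow> y = Tp) \<and> (x = Fm \<longleftrightarrow> y = Fm)"
  by (cases x; cases y) simp_all

lemma nfun_designated_iff [simp]: "nfun x \<in> designated \<longleftrightarrow> x \<notin> designated"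
  and nfun_eq_Tp_iff [simp]: "nfun x = Tp \<longleftrightarrow> x = Fm"
  and nfun_eq_Fm_iff [simp]: "nfun x = Fm \<longleftrightarrow> x = Tp"
  by (cases x; simp)+

lemma tmax_designated_iff [simp]: "tmax x y \<in> designated \<longleftrightarrow> x \<in> designated \<or> y \<in> designated"
  and tmax_eq_Tp_iff [simp]: "tmax x y = Tp \<longleftrightarrow> x = Tp \<or> y = Tp"
  and tmax_eq_Fm_iff [simp]: "tmax x y = Fm \<longleftrightarrow> x = Fm \<and> y = Fm"
  by (cases x; cases y; simp add: tmax_def)+

lemma negM_eq: "negM x = {nfun x}"
  by (cases x) simp_all

lemma boxM_iff: "y \<in> boxM x \<longleftrightarrow> (y \<in> designated \<longleftrightarrow> x = Tp) \<and> (y = Tp \<longleftrightarrow> x = Tp)"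
  by (cases x; cases y) simp_all

lemma valuation_iff:
  "valuation v \<longleftrightarrow>
     (\<forall>a. v (Neg a) = nfun (v a)) \<and>
     (\<forall>a b. v (Imp a b) = tmax (nfun (v a)) (v b)) \<and>
     (\<forall>a. (v (Box a) \<in> designated \<longleftrightarrow> v a = Tp) \<and> (v (Box a) = Tp \<longleftrightarrow> v a = Tp))"
  by (auto simp: valuation_def negM_eq impM_def boxM_iff)

lemma axiom_designated:
  assumes "valuation v" and "axiom a"
  shows "v a \<in> designated"
proof -
  from assms(1) have [simp]:
      "v (Neg b) = nfun (v b)" "v (Imp b c) = tmax (nfun (v b)) (v c)"
      "v (Box b) \<in> designated \<longleftrightarrow> v b = Tp" "v (Box b) = Tp \<longleftrightarrow> v b = Tp" for b c
    by (simp_all add: valuation_iff)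
  from assms(2) show ?thesis
    by cases (auto simp: Dia_def)
qed

lemma derivable_designated:
  "derivable G a \<Longrightarrow> valuation v \<Longrightarrow> \<forall>g\<in>G. v g \<in> designated \<Longrightarrow> v a \<in> designated"
proof (induction rule: derivable.induct)
  case (Ax a G)
  then show ?case by (simp add: axiom_designated)
next
  case (MP G a b)
  then show ?case by (simp add: valuation_iff)
qed simp

theorem derivable_imp_entails: "derivable G a \<Longrightarrow> entails G a"
  by (simp add: entails_def derivable_designated)

lemma derivable_mono: "derivable G a \<Longrightarrow> G \<subseteq> H \<Longrightarrow> derivable H a"
  by (induction rule: derivable.induct) (auto intro: derivable.intros)

lemma derivable_axiom_mp: "axiom (Imp a b) \<Longrightarrow> derivable G a \<Longrightarrow> derivable G b"
  by (rule derivable.MP) (auto intro: derivable.Ax)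

lemma derivable_weaken_imp: "derivable G a \<Longrightarrow> derivable G (Imp b a)"
  by (rule derivable_axiom_mp[OF axiom.A1])

lemma derivable_imp_self: "derivable G (Imp a a)"
proof -
  have "derivable G (Imp (Imp a (Imp a a)) (Imp a a))"
    by (rule derivable_axiom_mp[OF axiom.A2], rule derivable.Ax, rule axiom.A1)
  then show ?thesis
    by (rule derivable.MP[rotated]) (rule derivable.Ax, rule axiom.A1)
qed

lemma deduction_theorem: "derivable (insert a G) b \<longleftrightarrow> derivable G (Imp a b)"
proof
  show "derivable (insert a G) b \<Longrightarrow> derivable G (Imp a b)"
  proof (induction "insert a G" b rule: derivable.induct)
    case (Prem b)
    then consider "b = a" | "b \<in> G" by blast
    then show ?case
      by cases (simp_all add: derivable_imp_self derivable_weaken_imp derivable.Prem)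
  next
    case (Ax b)
    then show ?case by (simp add: derivable.Ax derivable_weaken_imp)
  next
    case (MP c b)
    have "derivable G (Imp (Imp a c) (Imp a b))"
      using MP.hyps(4) by (rule derivable_axiom_mp[OF axiom.A2])
    with MP.hyps(2) show ?case by (rule derivable.MP)
  qed
next
  assume "derivable G (Imp a b)"
  then have "derivable (insert a G) (Imp a b)" by (rule derivable_mono) blast
  then show "derivable (insert a G) b"
    by (rule derivable.MP[rotated]) (simp add: derivable.Prem)
qed

lemma derivable_reductio:
  "derivable G (Imp (Neg b) (Neg a)) \<Longrightarrow> derivable G (Imp (Neg b) a) \<Longrightarrow> derivable G b"
  by (rule derivable.MP, assumption, rule derivable_axiom_mp[OF axiom.A3])

lemma derivable_explosion: "derivable G (Neg a) \<Longrightarrow> derivable G a \<Longrightarrow> derivable G b"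
  by (rule derivable_reductio; erule derivable_weaken_imp)

lemma derivable_neg_neg_elim: "derivable G (Imp (Neg (Neg a)) a)"
proof -
  have "derivable (insert (Neg (Neg a)) G) (Imp (Neg a) (Neg (Neg a)))"
    by (simp add: derivable.Prem derivable_weaken_imp)
  then have "derivable (insert (Neg (Neg a)) G) a"
    using derivable_imp_self by (rule derivable_reductio)
  then show ?thesis by (simp add: deduction_theorem)
qed

lemma derivable_contrapos:
  assumes "derivable G (Imp a b)"
  shows "derivable G (Imp (Neg b) (Neg a))"
proof -
  let ?H = "insert (Neg b) G"
  have "derivable (insert (Neg (Neg a)) ?H) a"
    by (rule derivable.MP[OF _ derivable_neg_neg_elim]) (simp add: derivable.Prem)
  moreover have "derivable (insert (Neg (Neg a)) ?H) (Imp a b)"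
    using assms by (rule derivable_mono) blast
  ultimately have "derivable ?H (Imp (Neg (Neg a)) b)"
    by (simp add: derivable.MP flip: deduction_theorem)
  moreover have "derivable ?H (Imp (Neg (Neg a)) (Neg b))"
    by (simp add: derivable.Prem derivable_weaken_imp)
  ultimately have "derivable ?H (Neg a)"
    by (rule derivable_reductio[rotated])
  then show ?thesis by (simp add: deduction_theorem)
qed

lemma derivable_contrapos_Neg:
  assumes "derivable G (Imp (Neg a) b)"
  shows "derivable G (Imp (Neg b) a)"
proof -
  let ?H = "insert (Neg b) G"
  have "derivable ?H (Imp (Neg a) (Neg b))"
    by (simp add: derivable.Prem derivable_weaken_imp)
  moreover have "derivable ?H (Imp (Neg a) b)"
    using assms by (rule derivable_mono) blast
  ultimately have "derivable ?H a" by (rule derivable_reductio)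
  then show ?thesis by (simp add: deduction_theorem)
qed

lemma derivable_cases: "derivable G (Imp a b) \<Longrightarrow> derivable G (Imp (Neg a) b) \<Longrightarrow> derivable G b"
  by (rule derivable_reductio[OF derivable_contrapos derivable_contrapos_Neg])

lemma derivable_Union_chain:
  assumes "derivable (\<Union>\<C>) a" and "\<C> \<noteq> {}" and "subset.chain \<A> \<C>"
  shows "\<exists>B\<in>\<C>. derivable B a"
  using assms(1)
proof (induction "\<Union>\<C>" a rule: derivable.induct)
  case (Prem a)
  then obtain B where "B \<in> \<C>" "a \<in> B" by blast
  then show ?case using derivable.Prem by blast
next
  case (Ax a)
  from assms(2) obtain B where "B \<in> \<C>" by blast
  then show ?case using derivable.Ax[OF Ax] by blast
next
  case (MP a b)
  then obtain B1 B2 where B1: "B1 \<in> \<C>" "derivable B1 a" and B2: "B2 \<in> \<C>" "derivable B2 (Imp a b)"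
    by blast
  from assms(3) B1(1) B2(1) consider "B1 \<subseteq> B2" | "B2 \<subseteq> B1"
    by (auto simp: subset_chain_def)
  then show ?case
  proof cases
    case 1
    with B1(2) have "derivable B2 a" by (rule derivable_mono)
    then show ?thesis using B2 derivable.MP by blast
  next
    case 2
    with B2(2) have "derivable B1 (Imp a b)" by (rule derivable_mono)
    then show ?thesis using B1 derivable.MP by blast
  qed
qed

locale maximal_nonderiving =
  fixes D :: "fm set" and a :: fm
  assumes not_derivable: "\<not> derivable D a"
    and derivable_insert: "p \<notin> D \<Longrightarrow> derivable (insert p D) a"

lemma lindenbaum:
  assumes "\<not> derivable G a"
  shows "\<exists>D. G \<subseteq> D \<and> maximal_nonderiving D a"
proof -
  let ?A = "{D. G \<subseteq> D \<and> \<not> derivable D a}"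
  have "\<exists>M\<in>?A. \<forall>X\<in>?A. M \<subseteq> X \<longrightarrow> X = M"
  proof (rule subset_Zorn_nonempty)
    show "?A \<noteq> {}" using assms by blast
  next
    fix \<C> assume nonempty: "\<C> \<noteq> {}" and chain: "subset.chain ?A \<C>"
    then have members: "G \<subseteq> B \<and> \<not> derivable B a" if "B \<in> \<C>" for B
      using that by (auto simp: subset_chain_def)
    have "\<not> derivable (\<Union>\<C>) a"
      using derivable_Union_chain[OF _ nonempty chain] members by blast
    moreover have "G \<subseteq> \<Union>\<C>"
      using nonempty members by blast
    ultimately show "\<Union>\<C> \<in> ?A" by blast
  qed
  then obtain M where "M \<in> ?A" and maximal: "\<forall>X\<in>?A. M \<subseteq> X \<longrightarrow> X = M" ..
  then have M: "G \<subseteq> M" "\<not> derivable M a" by simp_all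
  have "maximal_nonderiving M a"
  proof
    show "\<not> derivable M a" by (fact M(2))
  next
    fix p assume "p \<notin> M"
    show "derivable (insert p M) a"
    proof (rule ccontr)
      assume "\<not> derivable (insert p M) a"
      with M(1) have "insert p M \<in> ?A" by blast
      with maximal have "insert p M = M" by blast
      with \<open>p \<notin> M\<close> show False by blast
    qed
  qed
  with M(1) show ?thesis by blast
qed

definition canonical_valuation :: "fm set \<Rightarrow> fm \<Rightarrow> tv" where
  "canonical_valuation D p =
     (if p \<in> D then if Box p \<in> D then Tp else Cp
      else if Box (Neg p) \<in> D then Fm else Cm)"

context maximal_nonderiving
begin

lemma mem_if_derivable:
  assumes "derivable D p"
  shows "p \<in> D"
proof (rule ccontr)
  assume "p \<notin> D"
  then have "derivable D (Imp p a)"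
    by (simp add: derivable_insert flip: deduction_theorem)
  with assms have "derivable D a" by (rule derivable.MP)
  with not_derivable show False ..
qed

lemma axiom_mem: "axiom p \<Longrightarrow> p \<in> D"
  by (rule mem_if_derivable[OF derivable.Ax])

lemma Neg_mem_iff: "Neg p \<in> D \<longleftrightarrow> p \<notin> D"
proof
  assume "Neg p \<in> D"
  show "p \<notin> D"
  proof
    assume "p \<in> D"
    with \<open>Neg p \<in> D\<close> have "derivable D (Neg p)" and "derivable D p"
      by (simp_all add: derivable.Prem)
    then have "derivable D a" by (rule derivable_explosion)
    with not_derivable show False ..
  qed
next
  assume "p \<notin> D"
  show "Neg p \<in> D"
  proof (rule ccontr)
    assume "Neg p \<notin> D"
    with \<open>p \<notin> D\<close> have "derivable D (Imp p a)" and "derivable D (Imp (Neg p) a)"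
      by (simp_all add: derivable_insert flip: deduction_theorem)
    then have "derivable D a" by (rule derivable_cases)
    with not_derivable show False ..
  qed
qed

lemma Imp_mem_iff: "Imp p q \<in> D \<longleftrightarrow> (p \<in> D \<longrightarrow> q \<in> D)"
proof
  assume "Imp p q \<in> D"
  show "p \<in> D \<longrightarrow> q \<in> D"
  proof
    assume "p \<in> D"
    with \<open>Imp p q \<in> D\<close> have "derivable D p" and "derivable D (Imp p q)"
      by (simp_all add: derivable.Prem)
    then show "q \<in> D" by (rule mem_if_derivable[OF derivable.MP])
  qed
next
  assume "p \<in> D \<longrightarrow> q \<in> D"
  then consider "Neg p \<in> D" | "q \<in> D" by (auto simp: Neg_mem_iff)
  then show "Imp p q \<in> D"
  proof cases
    case 1
    then have "derivable (insert p D) (Neg p)" and "derivable (insert p D) p"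
      by (simp_all add: derivable.Prem)
    then have "derivable (insert p D) q" by (rule derivable_explosion)
    then show ?thesis by (simp add: mem_if_derivable deduction_theorem)
  next
    case 2
    then show ?thesis by (rule mem_if_derivable[OF derivable_weaken_imp[OF derivable.Prem]])
  qed
qed

lemma Box_mem_imp_mem: "Box p \<in> D \<Longrightarrow> p \<in> D"
  using axiom_mem[OF axiom.T[of p]] by (simp add: Imp_mem_iff)

lemma Box_Box_mem_iff: "Box (Box p) \<in> D \<longleftrightarrow> Box p \<in> D"
  using axiom_mem[OF axiom.Four[of p]] Box_mem_imp_mem[of "Box p"] by (auto simp: Imp_mem_iff)

lemma Box_Neg_Neg_mem_iff: "Box (Neg (Neg p)) \<in> D \<longleftrightarrow> Box p \<in> D"
  using axiom_mem[OF axiom.DN1[of p]] axiom_mem[OF axiom.DN2[of p]] by (auto simp: Imp_mem_iff)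

lemma Box_Imp_mem_iff: "Box (Imp p q) \<in> D \<longleftrightarrow> Box (Neg p) \<in> D \<or> Box q \<in> D"
  using axiom_mem[OF axiom.M1[of p q]] axiom_mem[OF axiom.M2[of q p]] axiom_mem[OF axiom.Kdet[of p q]]
  by (auto simp: Imp_mem_iff Neg_mem_iff Dia_def)

lemma Box_Neg_Imp_mem_iff: "Box (Neg (Imp p q)) \<in> D \<longleftrightarrow> Box p \<in> D \<and> Box (Neg q) \<in> D"
  using axiom_mem[OF axiom.K2[of p q]] axiom_mem[OF axiom.M3[of q p]] axiom_mem[OF axiom.M4[of p q]]
    Box_Neg_Neg_mem_iff[of p]
  by (auto simp: Imp_mem_iff Neg_mem_iff Dia_def)

lemma canonical_valuation_designated_iff: "canonical_valuation D p \<in> designated \<longleftrightarrow> p \<in> D"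
  by (simp add: canonical_valuation_def)

lemma canonical_valuation_eq_Tp_iff: "canonical_valuation D p = Tp \<longleftrightarrow> Box p \<in> D"
  using Box_mem_imp_mem[of p] by (auto simp: canonical_valuation_def)

lemma canonical_valuation_eq_Fm_iff: "canonical_valuation D p = Fm \<longleftrightarrow> Box (Neg p) \<in> D"
  using Box_mem_imp_mem[of "Neg p"] by (auto simp: canonical_valuation_def Neg_mem_iff)

lemma valuation_canonical_valuation: "valuation (canonical_valuation D)"
proof -
  note [simp] = canonical_valuation_designated_iff canonical_valuation_eq_Tp_iff
    canonical_valuation_eq_Fm_iff
  have "canonical_valuation D (Neg p) = nfun (canonical_valuation D p)" for p
    by (subst tv_eq_iff) (simp add: Neg_mem_iff Box_Neg_Neg_mem_iff)
  moreover have "canonical_valuation D (Imp p q) =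
      tmax (nfun (canonical_valuation D p)) (canonical_valuation D q)" for p q
    by (subst tv_eq_iff) (simp add: Imp_mem_iff Box_Imp_mem_iff Box_Neg_Imp_mem_iff)
  moreover have "canonical_valuation D (Box p) \<in> designated \<longleftrightarrow> canonical_valuation D p = Tp"
    and "canonical_valuation D (Box p) = Tp \<longleftrightarrow> canonical_valuation D p = Tp" for p
    by (simp_all add: Box_Box_mem_iff)
  ultimately show ?thesis
    by (simp add: valuation_iff)
qed

end

theorem entails_imp_derivable:
  assumes "entails G a"
  shows "derivable G a"
proof (rule ccontr)
  assume "\<not> derivable G a"
  then obtain D where "G \<subseteq> D" and maximal: "maximal_nonderiving D a"
    using lindenbaum by blast
  interpret maximal_nonderiving D a by (fact maximal)
  have "a \<notin> D"
    using not_derivable derivable.Prem by blast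
  moreover have "\<forall>g\<in>G. canonical_valuation D g \<in> designated"
    using \<open>G \<subseteq> D\<close> by (auto simp: canonical_valuation_designated_iff)
  ultimately show False
    using valuation_canonical_valuation assms
    by (auto simp: entails_def canonical_valuation_designated_iff)
qed

theorem mainTheorem7:
  shows "derivable \<Gamma> \<alpha> \<longleftrightarrow> entails \<Gamma> \<alpha>"
  using derivable_imp_entails entails_imp_derivable by blast

end
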